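(* Let $\Gamma$ be a simple graph on a finite set $X$ with $|X|\ge3$. 1. $G(\Gamma)$ acts transitively on $X$ if and only if the localized graphs ${}^x\Gamma$, $x\in X$, are pairwise isomorphic. 2. If $G(\Gamma)$ acts doubly transitively on $X$, then for each $x\in X$ the automorphism group $\mathrm{Aut}({}^x\Gamma)$ acts transitively on $X\setminus\{x\}$. 3. If for two distinct points $x,y\in X$ the groups $\mathrm{Aut}({}^x\Gamma)$ and $\mathrm{Aut}({}^y\Gamma)$ act transitively on $X\setminus\{x\}$ and $X\setminus\{y\}$ respectively, then $G(\Gamma)$ acts doubly transitively on $X$.
   Context: The matrix $\mathcal{E}=(\varepsilon_{i,j})$ of a simple graph on $X$ has $\varepsilon_{i,j}=-1$ if $i\ne j$ are adjacent and $1$ otherwise. Graphs with matrices $\mathcal{E},\mathcal{E}'$ are associated if $\varepsilon'_{i,j}=\nu_i\nu_j\varepsilon_{i,j}$ for some $\nu_i\in\{\pm1\}$. $G(\Gamma)$ is the group of permutations $\sigma$ of $X$ such that $\Gamma$ and its image ${}^\sigma\Gamma$ under $\sigma$ are associated. ${}^x\Gamma$ is the unique graph associated to $\Gamma$ in which $x$ is isolated. *)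

theory Defs
  imports "HOL-Combinatorics.Permutations"
begin

definition simple_graph :: "'a set \<Rightarrow> ('a \<Rightarrow> 'a \<Rightarrow> bool) \<Rightarrow> bool" where
  "simple_graph X E \<longleftrightarrow>
     (\<forall>u v. E u v \<longrightarrow> u \<in> X \<and> v \<in> X \<and> u \<noteq> v) \<and> (\<forall>u v. E u v \<longrightarrow> E v u)"

definition eps :: "('a \<Rightarrow> 'a \<Rightarrow> bool) \<Rightarrow> 'a \<Rightarrow> 'a \<Rightarrow> int" where
  "eps E i j = (if i \<noteq> j \<and> E i j then -1 else 1)"

definition associated :: "'a set \<Rightarrow> ('a \<Rightarrow> 'a \<Rightarrow> bool) \<Rightarrow> ('a \<Rightarrow> 'a \<Rightarrow> bool) \<Rightarrow> bool" where
  "associated X E E' \<longleftrightarrow>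
     (\<exists>\<nu> :: 'a \<Rightarrow> int. (\<forall>i\<in>X. \<nu> i = 1 \<or> \<nu> i = -1) \<and>
        (\<forall>i\<in>X. \<forall>j\<in>X. eps E' i j = \<nu> i * \<nu> j * eps E i j))"

definition perm_graph :: "'a set \<Rightarrow> ('a \<Rightarrow> 'a) \<Rightarrow> ('a \<Rightarrow> 'a \<Rightarrow> bool) \<Rightarrow> ('a \<Rightarrow> 'a \<Rightarrow> bool)" where
  "perm_graph X s E = (\<lambda>u v. u \<in> X \<and> v \<in> X \<and> E (inv s u) (inv s v))"

definition switch_group :: "'a set \<Rightarrow> ('a \<Rightarrow> 'a \<Rightarrow> bool) \<Rightarrow> ('a \<Rightarrow> 'a) set" where
  "switch_group X E = {s. s permutes X \<and> associated X E (perm_graph X s E)}"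

text \<open>The localized graph: the unique graph associated to E in which x is isolated.\<close>
definition localized :: "'a set \<Rightarrow> ('a \<Rightarrow> 'a \<Rightarrow> bool) \<Rightarrow> 'a \<Rightarrow> ('a \<Rightarrow> 'a \<Rightarrow> bool)" where
  "localized X E x = (THE E'. simple_graph X E' \<and> associated X E E' \<and> (\<forall>y. \<not> E' x y))"

definition aut :: "'a set \<Rightarrow> ('a \<Rightarrow> 'a \<Rightarrow> bool) \<Rightarrow> ('a \<Rightarrow> 'a) set" where
  "aut X E = {s. s permutes X \<and> (\<forall>u\<in>X. \<forall>v\<in>X. E u v \<longleftrightarrow> E (s u) (s v))}"

definition graph_iso :: "'a set \<Rightarrow> ('a \<Rightarrow> 'a \<Rightarrow> bool) \<Rightarrow> ('a \<Rightarrow> 'a \<Rightarrow> bool) \<Rightarrow> bool" where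
  "graph_iso X E E' \<longleftrightarrow>
     (\<exists>f. bij_betw f X X \<and> (\<forall>u\<in>X. \<forall>v\<in>X. E u v \<longleftrightarrow> E' (f u) (f v)))"

definition transitive_on :: "('a \<Rightarrow> 'a) set \<Rightarrow> 'a set \<Rightarrow> bool" where
  "transitive_on G Y \<longleftrightarrow> (\<forall>y\<in>Y. \<forall>z\<in>Y. \<exists>s\<in>G. s y = z)"

definition doubly_transitive_on :: "('a \<Rightarrow> 'a) set \<Rightarrow> 'a set \<Rightarrow> bool" where
  "doubly_transitive_on G Y \<longleftrightarrow>
     (\<forall>y1\<in>Y. \<forall>y2\<in>Y. \<forall>z1\<in>Y. \<forall>z2\<in>Y. y1 \<noteq> y2 \<longrightarrow> z1 \<noteq> z2 \<longrightarrow>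
        (\<exists>s\<in>G. s y1 = z1 \<and> s y2 = z2))"

end

theory Submission
  imports Defs
begin

text \<open>Switching changes the signs \<open>\<epsilon>\<^sub>i\<^sub>j\<close> but not the triangle products
  \<open>\<epsilon>\<^sub>a\<^sub>b \<epsilon>\<^sub>b\<^sub>c \<epsilon>\<^sub>a\<^sub>c\<close>, and these products determine the switching class (the two-graph of
  \<open>\<Gamma>\<close>). Hence \<open>G(\<Gamma>)\<close> is exactly the group of permutations preserving all triangle
  signs, and \<open>\<^sup>x\<Gamma>\<close> is the graph whose edges \<open>uv\<close> are the triangles \<open>xuv\<close> of sign \<open>-1\<close>.
  Consequently a permutation \<open>s\<close> maps \<open>\<^sup>x\<Gamma>\<close> isomorphically onto \<open>\<^sup>y\<Gamma>\<close> iff it maps the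
  triangle signs at \<open>x\<close> to those at \<open>y\<close>, and by the cocycle identity every such \<open>s\<close>
  lies in \<open>G(\<Gamma>)\<close>. Since \<open>s x\<close> is then isolated in \<open>\<^sup>y\<Gamma>\<close>, as is \<open>y\<close>, composing with the
  transposition of \<open>s x\<close> and \<open>y\<close> yields an element of \<open>G(\<Gamma>)\<close> sending \<open>x\<close> to \<open>y\<close>.
  This gives part 1 directly and part 2 via the stabiliser of \<open>x\<close>. For part 3,
  \<open>Aut(\<^sup>x\<Gamma>) \<subseteq> G(\<Gamma>)\<close>, and the same transposition correction (now of \<open>a x\<close> and \<open>x\<close>)
  shows that the stabiliser of \<open>x\<close> in \<open>G(\<Gamma>)\<close> is transitive on \<open>X - {x}\<close>; together with
  \<open>Aut(\<^sup>y\<Gamma>)\<close> and a third point this makes \<open>G(\<Gamma>)\<close> transitive, hence doubly transitive.\<close>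

definition triangle_sign :: "('a \<Rightarrow> 'a \<Rightarrow> bool) \<Rightarrow> 'a \<Rightarrow> 'a \<Rightarrow> 'a \<Rightarrow> int" where
  "triangle_sign E a b c = eps E a b * eps E b c * eps E a c"

definition two_graph_aut :: "'a set \<Rightarrow> ('a \<Rightarrow> 'a \<Rightarrow> bool) \<Rightarrow> ('a \<Rightarrow> 'a) \<Rightarrow> bool" where
  "two_graph_aut X E s \<longleftrightarrow> s permutes X \<and>
     (\<forall>u\<in>X. \<forall>v\<in>X. \<forall>w\<in>X. triangle_sign E (s u) (s v) (s w) = triangle_sign E u v w)"

lemma eps_commute: "simple_graph X E \<Longrightarrow> eps E a b = eps E b a"
  unfolding simple_graph_def eps_def by auto

lemma triangle_sign_cases: "triangle_sign E a b c = 1 \<or> triangle_sign E a b c = -1"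
  by (simp add: triangle_sign_def eps_def)

lemma triangle_sign_same_left [simp]: "triangle_sign E a a c = 1"
  and triangle_sign_same_right [simp]: "triangle_sign E a c c = 1"
  by (simp_all add: triangle_sign_def eps_def)

lemma triangle_sign_commute:
  "simple_graph X E \<Longrightarrow> triangle_sign E x a b = triangle_sign E x b a"
  unfolding triangle_sign_def using eps_commute[of X E] by (simp add: mult_ac)

lemma triangle_sign_cocycle:
  "triangle_sign E u v w = triangle_sign E x u v * triangle_sign E x v w * triangle_sign E x u w"
  by (simp add: triangle_sign_def eps_def)

lemma associated_iff_triangle_sign:
  "associated X E E' \<longleftrightarrow>
     (\<forall>a\<in>X. \<forall>b\<in>X. \<forall>c\<in>X. triangle_sign E' a b c = triangle_sign E a b c)"
proof
  assume "associated X E E'"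
  then obtain \<nu> :: "'a \<Rightarrow> int" where \<nu>: "\<forall>i\<in>X. \<nu> i = 1 \<or> \<nu> i = -1"
    and eps': "\<forall>i\<in>X. \<forall>j\<in>X. eps E' i j = \<nu> i * \<nu> j * eps E i j"
    unfolding associated_def by blast
  have \<nu>_sq: "\<nu> i * \<nu> i = 1" if "i \<in> X" for i using \<nu> that by auto
  show "\<forall>a\<in>X. \<forall>b\<in>X. \<forall>c\<in>X. triangle_sign E' a b c = triangle_sign E a b c"
  proof (intro ballI)
    fix a b c assume abc: "a \<in> X" "b \<in> X" "c \<in> X"
    have "triangle_sign E' a b c = (\<nu> a * \<nu> a) * (\<nu> b * \<nu> b) * (\<nu> c * \<nu> c) * triangle_sign E a b c"
      using abc eps' by (simp add: triangle_sign_def mult_ac)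
    then show "triangle_sign E' a b c = triangle_sign E a b c" using \<nu>_sq abc by simp
  qed
next
  assume same: "\<forall>a\<in>X. \<forall>b\<in>X. \<forall>c\<in>X. triangle_sign E' a b c = triangle_sign E a b c"
  show "associated X E E'"
  proof (cases "X = {}")
    case True then show ?thesis unfolding associated_def by simp
  next
    case False
    then obtain x where x: "x \<in> X" by blast
    \<comment> \<open>switch at every vertex where the edges to \<open>x\<close> differ\<close>
    define \<nu> where "\<nu> i = eps E' x i * eps E x i" for i
    show ?thesis unfolding associated_def
    proof (intro exI[of _ \<nu>] conjI ballI)
      fix i show "\<nu> i = 1 \<or> \<nu> i = -1" by (simp add: \<nu>_def eps_def)
    next
      fix i j assume ij: "i \<in> X" "j \<in> X"
      have "\<nu> i * \<nu> j * eps E i j = eps E' x i * eps E' x j * triangle_sign E x i j"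
        by (simp add: \<nu>_def triangle_sign_def mult_ac)
      also have "\<dots> = eps E' x i * eps E' x j * triangle_sign E' x i j" using same x ij by simp
      also have "\<dots> = eps E' i j" by (simp add: triangle_sign_def eps_def)
      finally show "eps E' i j = \<nu> i * \<nu> j * eps E i j" by simp
    qed
  qed
qed

lemma localized_eq:
  assumes graph: "simple_graph X E" and x: "x \<in> X"
  shows "localized X E x = (\<lambda>u v. u \<in> X \<and> v \<in> X \<and> u \<noteq> v \<and> triangle_sign E x u v = -1)"
    (is "_ = ?L")
  unfolding localized_def
proof (rule the_equality)
  have eps_L: "eps ?L a b = triangle_sign E x a b" if "a \<in> X" "b \<in> X" for a b
    using that triangle_sign_cases[of E x a b] by (auto simp: eps_def)
  show "simple_graph X ?L \<and> associated X E ?L \<and> (\<forall>y. \<not> ?L x y)"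
  proof (intro conjI)
    show "simple_graph X ?L"
      unfolding simple_graph_def using triangle_sign_commute[OF graph] by auto
    show "associated X E ?L"
      unfolding associated_iff_triangle_sign
    proof (intro ballI)
      fix a b c assume "a \<in> X" "b \<in> X" "c \<in> X"
      then have "triangle_sign ?L a b c
          = triangle_sign E x a b * triangle_sign E x b c * triangle_sign E x a c"
        by (simp add: triangle_sign_def[of ?L] eps_L)
      then show "triangle_sign ?L a b c = triangle_sign E a b c"
        using triangle_sign_cocycle[of E a b c x] by simp
    qed
    show "\<forall>y. \<not> ?L x y" by simp
  qed
next
  fix E' assume E': "simple_graph X E' \<and> associated X E E' \<and> (\<forall>y. \<not> E' x y)"
  show "E' = ?L"
  proof (intro ext)
    fix u v
    show "E' u v = ?L u v"
    proof (cases "u \<in> X \<and> v \<in> X")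
      case False then show ?thesis using E' unfolding simple_graph_def by auto
    next
      case True
      \<comment> \<open>\<open>x\<close> is isolated in \<open>E'\<close>, so the triangle \<open>xuv\<close> of \<open>E'\<close> only sees the edge \<open>uv\<close>\<close>
      have "eps E' u v = triangle_sign E' x u v" using E' by (simp add: triangle_sign_def eps_def)
      also have "\<dots> = triangle_sign E x u v"
        using E' True x by (simp add: associated_iff_triangle_sign)
      finally have "eps E' u v = triangle_sign E x u v" .
      moreover have "E' u v \<longleftrightarrow> u \<noteq> v \<and> eps E' u v = -1"
        using E' unfolding simple_graph_def eps_def by auto
      ultimately show ?thesis using True by auto
    qed
  qed
qed

lemma eps_perm_graph:
  assumes "s permutes X" "u \<in> X" "v \<in> X"
  shows "eps (perm_graph X s E) u v = eps E (inv s u) (inv s v)"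
proof -
  have "inv s u = inv s v \<longleftrightarrow> u = v" by (metis assms(1) permutes_inverses(1))
  then show ?thesis using assms by (simp add: eps_def perm_graph_def)
qed

lemma two_graph_aut_inv:
  assumes "two_graph_aut X E s" shows "two_graph_aut X E (inv s)"
proof -
  have perm: "s permutes X"
    and keep: "\<forall>u\<in>X. \<forall>v\<in>X. \<forall>w\<in>X. triangle_sign E (s u) (s v) (s w) = triangle_sign E u v w"
    using assms unfolding two_graph_aut_def by auto
  show ?thesis unfolding two_graph_aut_def
  proof (intro conjI permutes_inv[OF perm] ballI)
    fix u v w assume "u \<in> X" "v \<in> X" "w \<in> X"
    then show "triangle_sign E (inv s u) (inv s v) (inv s w) = triangle_sign E u v w"
      using keep[rule_format, of "inv s u" "inv s v" "inv s w"] perm permutes_inv[OF perm]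
      by (simp add: permutes_in_image permutes_inverses)
  qed
qed

lemma two_graph_aut_comp:
  "two_graph_aut X E s \<Longrightarrow> two_graph_aut X E t \<Longrightarrow> two_graph_aut X E (t \<circ> s)"
  unfolding two_graph_aut_def by (auto simp: permutes_compose permutes_in_image)

lemma two_graph_aut_id: "two_graph_aut X E id"
  unfolding two_graph_aut_def by (simp add: permutes_id)

lemma switch_group_iff_two_graph_aut: "s \<in> switch_group X E \<longleftrightarrow> two_graph_aut X E s"
proof
  assume "s \<in> switch_group X E"
  then have perm: "s permutes X"
    and "\<forall>a\<in>X. \<forall>b\<in>X. \<forall>c\<in>X.
           triangle_sign E (inv s a) (inv s b) (inv s c) = triangle_sign E a b c"
    unfolding switch_group_def associated_iff_triangle_sign
    by (auto simp: triangle_sign_def eps_perm_graph)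
  then have "two_graph_aut X E (inv s)"
    unfolding two_graph_aut_def by (simp add: permutes_inv)
  then show "two_graph_aut X E s"
    using two_graph_aut_inv inv_inv_eq[OF permutes_bij[OF perm]] by metis
next
  assume "two_graph_aut X E s"
  then have "two_graph_aut X E (inv s)" and perm: "s permutes X"
    using two_graph_aut_inv two_graph_aut_def by blast+
  then show "s \<in> switch_group X E"
    unfolding switch_group_def two_graph_aut_def associated_iff_triangle_sign
    by (auto simp: triangle_sign_def eps_perm_graph)
qed

lemma localized_map_iff_triangle_sign:
  assumes graph: "simple_graph X E" and x: "x \<in> X" and y: "y \<in> X"
    and f: "\<forall>u\<in>X. f u \<in> X" "inj_on f X"
  shows "(\<forall>u\<in>X. \<forall>v\<in>X. localized X E x u v \<longleftrightarrow> localized X E y (f u) (f v)) \<longleftrightarrow>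
         (\<forall>u\<in>X. \<forall>v\<in>X. triangle_sign E y (f u) (f v) = triangle_sign E x u v)"
proof -
  have "(localized X E x u v \<longleftrightarrow> localized X E y (f u) (f v)) \<longleftrightarrow>
          triangle_sign E y (f u) (f v) = triangle_sign E x u v"
    if uv: "u \<in> X" "v \<in> X" for u v
  proof (cases "u = v")
    case True then show ?thesis by (simp add: localized_eq[OF graph x] localized_eq[OF graph y])
  next
    case False
    then have "f u \<noteq> f v" using f uv by (auto dest: inj_onD)
    then show ?thesis
      using False uv f triangle_sign_cases[of E x u v] triangle_sign_cases[of E y "f u" "f v"]
      by (auto simp: localized_eq[OF graph x] localized_eq[OF graph y])
  qed
  then show ?thesis by blast
qed

lemma localized_map_iff_triangle_sign_permutes:
  assumes "simple_graph X E" "x \<in> X" "y \<in> X" "s permutes X"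
  shows "(\<forall>u\<in>X. \<forall>v\<in>X. localized X E x u v \<longleftrightarrow> localized X E y (s u) (s v)) \<longleftrightarrow>
         (\<forall>u\<in>X. \<forall>v\<in>X. triangle_sign E y (s u) (s v) = triangle_sign E x u v)"
  using assms localized_map_iff_triangle_sign[of X E x y s]
  by (simp add: permutes_in_image permutes_inj_on)

lemma two_graph_aut_if_triangle_sign_map:
  assumes perm: "s permutes X"
    and signs: "\<forall>u\<in>X. \<forall>v\<in>X. triangle_sign E y (s u) (s v) = triangle_sign E x u v"
  shows "two_graph_aut X E s"
  unfolding two_graph_aut_def
proof (intro conjI perm ballI)
  fix u v w assume uvw: "u \<in> X" "v \<in> X" "w \<in> X"
  have "triangle_sign E (s u) (s v) (s w)
      = triangle_sign E y (s u) (s v) * triangle_sign E y (s v) (s w) * triangle_sign E y (s u) (s w)"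
    by (rule triangle_sign_cocycle)
  also have "\<dots> = triangle_sign E x u v * triangle_sign E x v w * triangle_sign E x u w"
    using signs uvw by simp
  also have "\<dots> = triangle_sign E u v w" by (rule triangle_sign_cocycle[symmetric])
  finally show "triangle_sign E (s u) (s v) (s w) = triangle_sign E u v w" .
qed

lemma localized_map_if_two_graph_aut:
  assumes graph: "simple_graph X E" and s: "two_graph_aut X E s" and x: "x \<in> X"
  shows "\<forall>u\<in>X. \<forall>v\<in>X. localized X E x u v \<longleftrightarrow> localized X E (s x) (s u) (s v)"
proof -
  have perm: "s permutes X" using s unfolding two_graph_aut_def by blast
  have "\<forall>u\<in>X. \<forall>v\<in>X. triangle_sign E (s x) (s u) (s v) = triangle_sign E x u v"
    using s x unfolding two_graph_aut_def by blast
  then show ?thesis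
    using localized_map_iff_triangle_sign_permutes[OF graph x _ perm] x perm
    by (simp add: permutes_in_image)
qed

lemma triangle_sign_transpose_isolated:
  assumes graph: "simple_graph X E"
    and a: "\<forall>c\<in>X. triangle_sign E x a c = 1" and b: "\<forall>c\<in>X. triangle_sign E x b c = 1"
    and u: "u \<in> X" and v: "v \<in> X"
  shows "triangle_sign E x (transpose a b u) (transpose a b v) = triangle_sign E x u v"
proof -
  have "\<forall>c\<in>X. triangle_sign E x c a = 1" "\<forall>c\<in>X. triangle_sign E x c b = 1"
    using a b triangle_sign_commute[OF graph] by metis+
  then show ?thesis
    using u v a b by (cases "u = a"; cases "u = b"; cases "v = a"; cases "v = b") auto
qed

lemma two_graph_aut_transpose_comp:
  assumes graph: "simple_graph X E" and perm: "s permutes X" and x: "x \<in> X" and y: "y \<in> X"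
    and signs: "\<forall>u\<in>X. \<forall>v\<in>X. triangle_sign E y (s u) (s v) = triangle_sign E x u v"
  shows "two_graph_aut X E (transpose (s x) y \<circ> s)"
proof -
  have sx: "s x \<in> X" using perm x by (simp add: permutes_in_image)
  have sx_isolated: "\<forall>c\<in>X. triangle_sign E y (s x) c = 1"
  proof
    fix c assume c: "c \<in> X"
    have "triangle_sign E y (s x) c = triangle_sign E y (s x) (s (inv s c))"
      using perm by (simp add: permutes_inverses)
    also have "\<dots> = 1"
      using signs x c permutes_inv[OF perm] by (simp add: permutes_in_image)
    finally show "triangle_sign E y (s x) c = 1" .
  qed
  have y_isolated: "\<forall>c\<in>X. triangle_sign E y y c = 1" by simp
  have t_signs: "triangle_sign E y (transpose (s x) y (s u)) (transpose (s x) y (s v))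
        = triangle_sign E x u v" if "u \<in> X" "v \<in> X" for u v
  proof -
    have "s u \<in> X" "s v \<in> X" using that perm by (simp_all add: permutes_in_image)
    then have "triangle_sign E y (transpose (s x) y (s u)) (transpose (s x) y (s v))
        = triangle_sign E y (s u) (s v)"
      by (rule triangle_sign_transpose_isolated[OF graph sx_isolated y_isolated])
    then show ?thesis using signs that by simp
  qed
  have "transpose (s x) y \<circ> s permutes X"
    by (intro permutes_compose perm permutes_swap_id sx y)
  then show ?thesis by (rule two_graph_aut_if_triangle_sign_map[where y = y and x = x]) (simp add: t_signs)
qed

lemma aut_localized_triangle_sign:
  assumes graph: "simple_graph X E" and x: "x \<in> X" and a: "a \<in> aut X (localized X E x)"
  shows "\<forall>u\<in>X. \<forall>v\<in>X. triangle_sign E x (a u) (a v) = triangle_sign E x u v"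
proof -
  have "a permutes X"
    and "\<forall>u\<in>X. \<forall>v\<in>X. localized X E x u v \<longleftrightarrow> localized X E x (a u) (a v)"
    using a unfolding aut_def by auto
  then show ?thesis using localized_map_iff_triangle_sign_permutes[OF graph x x] by simp
qed

lemma two_graph_aut_if_aut_localized:
  assumes "simple_graph X E" "x \<in> X" "a \<in> aut X (localized X E x)"
  shows "two_graph_aut X E a"
proof (rule two_graph_aut_if_triangle_sign_map[where y = x and x = x])
  show "a permutes X" using assms(3) unfolding aut_def by simp
  show "\<forall>u\<in>X. \<forall>v\<in>X. triangle_sign E x (a u) (a v) = triangle_sign E x u v"
    by (rule aut_localized_triangle_sign[OF assms])
qed

lemma localized_iso_if_switch_group_transitive:
  assumes graph: "simple_graph X E" and trans: "transitive_on (switch_group X E) X"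
    and x: "x \<in> X" and y: "y \<in> X"
  shows "graph_iso X (localized X E x) (localized X E y)"
proof -
  obtain s where "s \<in> switch_group X E" and sx: "s x = y"
    using trans x y unfolding transitive_on_def by blast
  then have s: "two_graph_aut X E s" by (simp add: switch_group_iff_two_graph_aut)
  then have "bij_betw s X X" unfolding two_graph_aut_def by (simp add: permutes_imp_bij)
  then show ?thesis
    using localized_map_if_two_graph_aut[OF graph s x] sx unfolding graph_iso_def by auto
qed

lemma switch_group_transitive_if_localized_iso:
  assumes graph: "simple_graph X E"
    and iso: "\<forall>x\<in>X. \<forall>y\<in>X. graph_iso X (localized X E x) (localized X E y)"
  shows "transitive_on (switch_group X E) X"
  unfolding transitive_on_def
proof (intro ballI)
  fix x y assume x: "x \<in> X" and y: "y \<in> X"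
  obtain f where "bij_betw f X X"
    and f: "\<forall>u\<in>X. \<forall>v\<in>X. localized X E x u v \<longleftrightarrow> localized X E y (f u) (f v)"
    using iso x y unfolding graph_iso_def by blast
  \<comment> \<open>\<open>graph_iso\<close> only constrains \<open>f\<close> on \<open>X\<close>; extend it by the identity\<close>
  define s where "s z = (if z \<in> X then f z else z)" for z
  have "bij_betw s X X"
    using \<open>bij_betw f X X\<close> by (rule bij_betw_cong[THEN iffD1, rotated]) (simp add: s_def)
  then have perm: "s permutes X" by (rule bij_imp_permutes) (simp add: s_def)
  have "\<forall>u\<in>X. \<forall>v\<in>X. triangle_sign E y (s u) (s v) = triangle_sign E x u v"
    using localized_map_iff_triangle_sign_permutes[OF graph x y perm] f by (simp add: s_def)
  then have "two_graph_aut X E (transpose (s x) y \<circ> s)"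
    by (rule two_graph_aut_transpose_comp[OF graph perm x y])
  then show "\<exists>t\<in>switch_group X E. t x = y"
    by (intro bexI[of _ "transpose (s x) y \<circ> s"]) (simp_all add: switch_group_iff_two_graph_aut)
qed

lemma aut_localized_transitive_if_doubly_transitive:
  assumes graph: "simple_graph X E"
    and dtrans: "doubly_transitive_on (switch_group X E) X" and x: "x \<in> X"
  shows "transitive_on (aut X (localized X E x)) (X - {x})"
  unfolding transitive_on_def
proof (intro ballI)
  fix y z assume y: "y \<in> X - {x}" and z: "z \<in> X - {x}"
  then obtain s where "s \<in> switch_group X E" and sx: "s x = x" and sy: "s y = z"
    using dtrans x unfolding doubly_transitive_on_def by (metis DiffE singletonI)
  then have s: "two_graph_aut X E s" by (simp add: switch_group_iff_two_graph_aut)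
  then have "s \<in> aut X (localized X E x)"
    using localized_map_if_two_graph_aut[OF graph s x] sx
    unfolding aut_def two_graph_aut_def by simp
  then show "\<exists>a\<in>aut X (localized X E x). a y = z" using sy by blast
qed

lemma two_graph_aut_fixing_point:
  assumes graph: "simple_graph X E" and x: "x \<in> X"
    and trans: "transitive_on (aut X (localized X E x)) (X - {x})"
    and u: "u \<in> X - {x}" and v: "v \<in> X - {x}"
  shows "\<exists>k. two_graph_aut X E k \<and> k x = x \<and> k u = v"
proof -
  obtain a where a: "a \<in> aut X (localized X E x)" and au: "a u = v"
    using trans u v unfolding transitive_on_def by blast
  have perm: "a permutes X" using a unfolding aut_def by blast
  have "two_graph_aut X E (transpose (a x) x \<circ> a)"
    using two_graph_aut_transpose_comp[OF graph perm x x aut_localized_triangle_sign[OF graph x a]] .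
  moreover have "a u \<noteq> a x" using u permutes_inj[OF perm] by (auto dest: injD)
  ultimately show ?thesis using au v by (intro exI[of _ "transpose (a x) x \<circ> a"]) auto
qed

lemma two_graph_aut_moving_to:
  assumes graph: "simple_graph X E" and three: "card X \<ge> 3"
    and x: "x \<in> X" and y: "y \<in> X" and xy: "x \<noteq> y"
    and trans_x: "transitive_on (aut X (localized X E x)) (X - {x})"
    and trans_y: "transitive_on (aut X (localized X E y)) (X - {y})"
    and a: "a \<in> X"
  shows "\<exists>g. two_graph_aut X E g \<and> g a = x"
proof -
  consider "a = x" | "a \<noteq> x" "a \<noteq> y" | "a = y" by blast
  then show ?thesis
  proof cases
    case 1 then show ?thesis using two_graph_aut_id by (intro exI[of _ id]) simp
  next
    case 2
    then obtain b where "b \<in> aut X (localized X E y)" "b a = x"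
      using trans_y a x xy unfolding transitive_on_def by auto
    then show ?thesis using two_graph_aut_if_aut_localized[OF graph y] by blast
  next
    case 3
    \<comment> \<open>route \<open>y\<close> through a third point \<open>c\<close>\<close>
    have "\<not> X \<subseteq> {x, y}"
    proof
      assume "X \<subseteq> {x, y}"
      then have "card X \<le> card {x, y}" by (simp add: card_mono)
      also have "\<dots> \<le> 2" by (simp add: card_insert_if)
      finally show False using three by simp
    qed
    then obtain c where c: "c \<in> X" "c \<noteq> x" "c \<noteq> y" by blast
    obtain b1 where b1: "b1 \<in> aut X (localized X E x)" "b1 y = c"
      using trans_x y c xy unfolding transitive_on_def by auto
    obtain b2 where b2: "b2 \<in> aut X (localized X E y)" "b2 c = x"
      using trans_y x c xy unfolding transitive_on_def by auto
    have "two_graph_aut X E (b2 \<circ> b1)"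
      using two_graph_aut_comp two_graph_aut_if_aut_localized[OF graph x b1(1)]
        two_graph_aut_if_aut_localized[OF graph y b2(1)] by blast
    then show ?thesis using 3 b1 b2 by auto
  qed
qed

lemma doubly_transitive_if_aut_localized_transitive:
  assumes graph: "simple_graph X E" and three: "card X \<ge> 3"
    and x: "x \<in> X" and y: "y \<in> X" and xy: "x \<noteq> y"
    and trans_x: "transitive_on (aut X (localized X E x)) (X - {x})"
    and trans_y: "transitive_on (aut X (localized X E y)) (X - {y})"
  shows "doubly_transitive_on (switch_group X E) X"
  unfolding doubly_transitive_on_def
proof (intro ballI impI)
  note to_x = two_graph_aut_moving_to[OF graph three x y xy trans_x trans_y]
  fix y1 y2 z1 z2 assume yz: "y1 \<in> X" "y2 \<in> X" "z1 \<in> X" "z2 \<in> X" "y1 \<noteq> y2" "z1 \<noteq> z2"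
  obtain g where g: "two_graph_aut X E g" "g y1 = x" using to_x yz by blast
  obtain h where h: "two_graph_aut X E h" "h z1 = x" using to_x yz by blast
  have perm: "g permutes X" "h permutes X" using g h unfolding two_graph_aut_def by auto
  have "g y2 \<noteq> g y1" "h z2 \<noteq> h z1" using yz perm by (auto dest: permutes_inj injD)
  then have "g y2 \<in> X - {x}" "h z2 \<in> X - {x}" using yz g h perm by (auto simp: permutes_in_image)
  then obtain k where k: "two_graph_aut X E k" "k x = x" "k (g y2) = h z2"
    using two_graph_aut_fixing_point[OF graph x trans_x] by blast
  have "two_graph_aut X E (inv h \<circ> (k \<circ> g))"
    by (intro two_graph_aut_comp two_graph_aut_inv g h k)
  moreover have "(inv h \<circ> (k \<circ> g)) y1 = z1" "(inv h \<circ> (k \<circ> g)) y2 = z2"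
    using g h k perm by (simp_all add: permutes_inv_eq permutes_inverses)
  ultimately show "\<exists>s\<in>switch_group X E. s y1 = z1 \<and> s y2 = z2"
    by (intro bexI[of _ "inv h \<circ> (k \<circ> g)"]) (simp_all add: switch_group_iff_two_graph_aut)
qed

theorem proposition4:
  fixes X :: "'a set" and E :: "'a \<Rightarrow> 'a \<Rightarrow> bool"
  assumes "finite X" and "card X \<ge> 3" and "simple_graph X E"
  shows "(transitive_on (switch_group X E) X \<longleftrightarrow>
            (\<forall>x\<in>X. \<forall>y\<in>X. graph_iso X (localized X E x) (localized X E y)))
       \<and> (doubly_transitive_on (switch_group X E) X \<longrightarrow>
            (\<forall>x\<in>X. transitive_on (aut X (localized X E x)) (X - {x})))
       \<and> (\<forall>x\<in>X. \<forall>y\<in>X. x \<noteq> y \<longrightarrow>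
            transitive_on (aut X (localized X E x)) (X - {x}) \<longrightarrow>
            transitive_on (aut X (localized X E y)) (X - {y}) \<longrightarrow>
            doubly_transitive_on (switch_group X E) X)"
  using localized_iso_if_switch_group_transitive[OF assms(3)]
    switch_group_transitive_if_localized_iso[OF assms(3)]
    aut_localized_transitive_if_doubly_transitive[OF assms(3)]
    doubly_transitive_if_aut_localized_transitive[OF assms(3) assms(2)]
  by blast

end
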